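(* Let $k\ge 2$, and let $p,q$ be real polynomials with $\deg p=k$, $\deg q=k-1$, whose roots are real, simple and strictly interlacing, with roots of $p$ denoted $p_1<\dots<p_k$. Let $r>0$ and $\varphi\in(-\pi,\pi]$. Then each open disk $D_j$ ($j=1,\dots,k-1$), as well as the region $\{z\in\mathbb{C}:|z-\frac{p_1+p_k}{2}|>\frac{p_k-p_1}{2}\}$, contains at most one solution $z$ of the equation $\frac{q(z)}{p(z)}=re^{i\varphi}$.
   Context: $D_j$ denotes the open disk having the segment $[p_j,p_{j+1}]$ as a diameter (center $\frac{p_j+p_{j+1}}2$, radius $\frac{p_{j+1}-p_j}2$). *)

theory Defs
  imports "HOL-Analysis.Analysis" "HOL-Computational_Algebra.Polynomial"
begin

definition diam_disk :: "real \<Rightarrow> real \<Rightarrow> complex set" where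
  "diam_disk a b = ball (complex_of_real ((a + b) / 2)) ((b - a) / 2)"

end

theory Submission
  imports Defs
begin

(* Since deg q < deg p and the roots p_1 < ... < p_k of p are simple, the partial fraction
   decomposition gives  q/p = c * G  with a real constant c ~= 0 and
       G z = sum_i D_i / (z - p_i),
   and the interlacing of the roots of q makes every residue D_i positive.  Hence the equation
   determines G z, and it suffices to show that G is injective on each of the regions.
   If G z = G w with z ~= w, then sum_i D_i u_i v_i = 0 where u_i = (z - e)/(z - p_i),
   v_i = (w - e)/(w - p_i) for any real e.  Choosing e = p_j for the disk D_j, and e = p_k for the
   exterior region, elementary plane geometry shows that Re u_i and Re v_i have the sign of
   e - p_i whenever p_i ~= e (and u_i = v_i = 1 if p_i = e); moreover G maps the upper half
   plane to the lower one, so Im z and Im w have the same sign.  Then all products u_i v_i lie in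
   one closed half plane and not all on its boundary, contradicting sum_i D_i u_i v_i = 0. *)

lemma poly_eq_lead_coeff_prod_roots:
  fixes R :: "'a::idom poly" and t :: "'b \<Rightarrow> 'a"
  assumes fin: "finite I" and inj: "inj_on t I"
    and roots: "\<And>i. i \<in> I \<Longrightarrow> poly R (t i) = 0" and deg: "degree R = card I"
  shows "poly R x = lead_coeff R * (\<Prod>i\<in>I. x - t i)"
proof -
  define L where "L = smult (lead_coeff R) (\<Prod>i\<in>I. [:- t i, 1:])"
  have deg_prod: "degree (\<Prod>i\<in>I. [:- t i, 1:]) = card I"
    by (subst degree_prod_eq_sum_degree) auto
  have monic_prod: "poly.coeff (\<Prod>i\<in>I. [:- t i, 1:]) (card I) = 1"
    using lead_coeff_prod[of "\<lambda>i. [:- t i, 1:]" I] by (simp add: deg_prod)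
  have "R = L"
  proof (rule poly_eqI_degree_lead_coeff[where n = "card I" and A = "t ` I"])
    show "poly.coeff R (card I) = poly.coeff L (card I)"
      using monic_prod deg by (simp add: L_def)
    show "card I \<le> card (t ` I)" using inj by (simp add: card_image)
    show "degree L \<le> card I" using deg_prod by (simp add: L_def)
    show "poly R y = poly L y" if "y \<in> t ` I" for y
      using that fin roots by (auto simp: L_def poly_prod prod_zero_iff)
  qed (use deg in simp)
  moreover have "poly L x = lead_coeff R * (\<Prod>i\<in>I. x - t i)"
    by (simp add: L_def poly_prod)
  ultimately show ?thesis by simp
qed

lemma lagrange_interpolation:
  fixes R :: "'a::field poly" and t :: "'b \<Rightarrow> 'a"
  assumes fin: "finite I" and inj: "inj_on t I" and deg: "degree R < card I"
  shows "poly R x = (\<Sum>i\<in>I. poly R (t i) * (\<Prod>l\<in>I-{i}. (x - t l) / (t i - t l)))"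
proof -
  define L where "L = (\<Sum>i\<in>I. smult (poly R (t i) / (\<Prod>l\<in>I-{i}. t i - t l))
                                       (\<Prod>l\<in>I-{i}. [:- t l, 1:]))"
  have "degree L \<le> card I - 1"
    unfolding L_def
  proof (intro degree_sum_le order.trans[OF degree_smult_le])
    fix i assume "i \<in> I"
    then show "degree (\<Prod>l\<in>I-{i}. [:- t l, 1:]) \<le> card I - 1"
      using fin by (subst degree_prod_eq_sum_degree) auto
  qed (use fin in auto)
  then have deg_L: "degree L < card (t ` I)"
    using inj deg by (simp add: card_image)
  have "poly L (t j) = poly R (t j)" if j: "j \<in> I" for j
  proof -
    have nodes_distinct: "(\<Prod>l\<in>I-{j}. t j - t l) \<noteq> 0"
      using fin j inj by (auto simp: prod_zero_iff dest: inj_onD)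
    have other_terms_vanish: "(\<Prod>l\<in>I-{i}. t j - t l) = 0" if "i \<in> I - {j}" for i
      using fin j that by (auto simp: prod_zero_iff)
    have "poly L (t j) = (\<Sum>i\<in>I. poly R (t i) / (\<Prod>l\<in>I-{i}. t i - t l) * (\<Prod>l\<in>I-{i}. t j - t l))"
      by (simp add: L_def poly_sum poly_prod)
    also have "\<dots> = poly R (t j) / (\<Prod>l\<in>I-{j}. t j - t l) * (\<Prod>l\<in>I-{j}. t j - t l)"
      using fin j other_terms_vanish by (simp add: sum.remove[of _ j] sum.neutral)
    also have "\<dots> = poly R (t j)" using nodes_distinct by simp
    finally show ?thesis .
  qed
  then have "R = L"
    using deg deg_L inj by (intro poly_eqI_degree[where A = "t ` I"]) (auto simp: card_image)
  moreover have "poly L x = (\<Sum>i\<in>I. poly R (t i) * (\<Prod>l\<in>I-{i}. (x - t l) / (t i - t l)))"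
    by (simp add: L_def poly_sum poly_prod prod_dividef)
  ultimately show ?thesis by simp
qed

lemma partial_fractions_simple_roots:
  fixes P Q :: "'a::field poly" and t :: "'b \<Rightarrow> 'a"
  assumes fin: "finite I" and inj: "inj_on t I"
    and roots: "\<And>i. i \<in> I \<Longrightarrow> poly P (t i) = 0"
    and degP: "degree P = card I" and degQ: "degree Q < card I"
    and x: "\<And>i. i \<in> I \<Longrightarrow> x \<noteq> t i"
  shows "poly Q x / poly P x =
         (\<Sum>i\<in>I. poly Q (t i) / (lead_coeff P * (\<Prod>l\<in>I-{i}. t i - t l)) / (x - t i))"
proof -
  have "P \<noteq> 0" using degP degQ by auto
  then have "lead_coeff P \<noteq> 0" by simp
  have "poly Q x / poly P x =
        (\<Sum>i\<in>I. poly Q (t i) * (\<Prod>l\<in>I-{i}. (x - t l) / (t i - t l)) / poly P x)"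
    by (subst lagrange_interpolation[OF fin inj degQ]) (simp add: sum_divide_distrib)
  also have "\<dots> = (\<Sum>i\<in>I. poly Q (t i) / (lead_coeff P * (\<Prod>l\<in>I-{i}. t i - t l)) / (x - t i))"
  proof (rule sum.cong[OF refl])
    fix i assume i: "i \<in> I"
    have P_split: "poly P x = lead_coeff P * ((x - t i) * (\<Prod>l\<in>I-{i}. x - t l))"
      using poly_eq_lead_coeff_prod_roots[OF fin inj roots degP] fin i by (simp add: prod.remove)
    have "x - t i \<noteq> 0" "(\<Prod>l\<in>I-{i}. x - t l) \<noteq> 0"
      using fin i x by (auto simp: prod_zero_iff)
    moreover have "(\<Prod>l\<in>I-{i}. t i - t l) \<noteq> 0"
      using fin i inj by (auto simp: prod_zero_iff dest: inj_onD)
    ultimately show "poly Q (t i) * (\<Prod>l\<in>I-{i}. (x - t l) / (t i - t l)) / poly P x =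
        poly Q (t i) / (lead_coeff P * (\<Prod>l\<in>I-{i}. t i - t l)) / (x - t i)"
      using \<open>lead_coeff P \<noteq> 0\<close> unfolding P_split by (simp add: prod_dividef field_simps)
  qed
  finally show ?thesis .
qed

text \<open>The residue of q/p at the root a i of p, up to the constant factor
  lead_coeff q / lead_coeff p, when a 1 < ... < a k and b 1 < ... < b (k-1) are the roots of
  p and q.\<close>

definition interlacing_weight :: "(nat \<Rightarrow> real) \<Rightarrow> (nat \<Rightarrow> real) \<Rightarrow> nat \<Rightarrow> nat \<Rightarrow> real" where
  "interlacing_weight a b k i = (\<Prod>m\<in>{1..k-1}. a i - b m) / (\<Prod>l\<in>{1..k}-{i}. a i - a l)"

text \<open>Strict interlacing makes all these residues positive: pairing the factor a i - b m
  with a i - a (s m), where s skips the index i, every quotient is positive.\<close>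

lemma interlacing_weight_pos:
  fixes a b :: "nat \<Rightarrow> real"
  assumes a_mono: "\<And>i j. 1 \<le> i \<Longrightarrow> i < j \<Longrightarrow> j \<le> k \<Longrightarrow> a i < a j"
    and interlace: "\<And>j. 1 \<le> j \<Longrightarrow> j \<le> k - 1 \<Longrightarrow> a j < b j \<and> b j < a (j + 1)"
    and i: "i \<in> {1..k}"
  shows "0 < interlacing_weight a b k i"
proof -
  define s where "s m = (if m < i then m else Suc m)" for m
  have "bij_betw s {1..k-1} ({1..k}-{i})"
  proof (rule bij_betw_imageI)
    show "inj_on s {1..k-1}" by (auto simp: inj_on_def s_def)
    show "s ` {1..k-1} = {1..k}-{i}"
    proof
      show "s ` {1..k-1} \<subseteq> {1..k}-{i}" using i by (auto simp: s_def)
      show "{1..k}-{i} \<subseteq> s ` {1..k-1}"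
      proof
        fix l assume l: "l \<in> {1..k}-{i}"
        show "l \<in> s ` {1..k-1}"
        proof (cases "l < i")
          case True
          then show ?thesis using l i by (intro image_eqI[of _ _ l]) (auto simp: s_def)
        next
          case False
          then show ?thesis using l i by (intro image_eqI[of _ _ "l - 1"]) (auto simp: s_def)
        qed
      qed
    qed
  qed
  then have "(\<Prod>l\<in>{1..k}-{i}. a i - a l) = (\<Prod>m\<in>{1..k-1}. a i - a (s m))"
    by (rule prod.reindex_bij_betw[symmetric])
  then have "interlacing_weight a b k i = (\<Prod>m\<in>{1..k-1}. (a i - b m) / (a i - a (s m)))"
    by (simp add: interlacing_weight_def prod_dividef)
  also have "\<dots> > 0"
  proof (rule prod_pos)
    fix m assume m: "m \<in> {1..k-1}"
    have between: "a m < b m" "b m < a (m + 1)" using interlace[of m] m by auto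
    show "(a i - b m) / (a i - a (s m)) > 0"
    proof (cases "m < i")
      case True
      then have "a (m + 1) \<le> a i"
        using i m a_mono[of "m + 1" i] by (cases "m + 1 = i") auto
      then show ?thesis using True between by (simp add: s_def)
    next
      case False
      then have "i \<le> m" by simp
      then have "a i \<le> a m"
        using i m a_mono[of i m] by (cases "m = i") (auto simp: less_imp_le)
      moreover have "a i < a (m + 1)"
        using \<open>i \<le> m\<close> i m a_mono[of i "m + 1"] by auto
      ultimately show ?thesis using False between by (simp add: s_def divide_neg_neg)
    qed
  qed
  finally show ?thesis .
qed

definition pole_sum :: "('b \<Rightarrow> real) \<Rightarrow> ('b \<Rightarrow> real) \<Rightarrow> 'b set \<Rightarrow> complex \<Rightarrow> complex" where
  "pole_sum D t I z = (\<Sum>i\<in>I. of_real (D i) / (z - of_real (t i)))"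

text \<open>For Im z > 0 this places all these values in the open first or third
  quadrant; it is the condition under which the pole sum is injective.\<close>

definition pole_compatible :: "real \<Rightarrow> ('b \<Rightarrow> real) \<Rightarrow> 'b set \<Rightarrow> complex \<Rightarrow> bool" where
  "pole_compatible e t I z \<longleftrightarrow>
     (\<forall>i\<in>I. z \<noteq> of_real (t i) \<and>
        (t i \<noteq> e \<longrightarrow> 0 < (e - t i) * Re ((z - of_real e) / (z - of_real (t i)))))"

lemma Re_Im_real_ratio:
  fixes z :: complex and e t :: real
  shows "Re ((z - of_real e) / (z - of_real t)) =
           ((Re z - e) * (Re z - t) + (Im z)\<^sup>2) / (cmod (z - of_real t))\<^sup>2"
    and "Im ((z - of_real e) / (z - of_real t)) = Im z * (e - t) / (cmod (z - of_real t))\<^sup>2"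
  unfolding cmod_power2 by (simp_all add: Re_divide Im_divide power2_eq_square algebra_simps)

text \<open>Compatibility expressed through the real quantity (Re z - e)(Re z - t) + (Im z)^2,
  whose sign decides whether z lies inside the circle with diameter [e, t].\<close>

lemma pole_compatible_real:
  "pole_compatible e t I z \<longleftrightarrow>
     (\<forall>i\<in>I. z \<noteq> of_real (t i) \<and>
        (t i \<noteq> e \<longrightarrow> 0 < (e - t i) * ((Re z - e) * (Re z - t i) + (Im z)\<^sup>2)))"
proof -
  have "0 < (e - s) * Re ((z - of_real e) / (z - of_real s)) \<longleftrightarrow>
        0 < (e - s) * ((Re z - e) * (Re z - s) + (Im z)\<^sup>2)" if "z \<noteq> of_real s" for s
  proof -
    have "0 < (cmod (z - of_real s))\<^sup>2" using that by simp
    then show ?thesis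
      by (simp add: Re_Im_real_ratio times_divide_eq_right zero_less_divide_iff)
  qed
  then show ?thesis unfolding pole_compatible_def by blast
qed

lemma mobius_product_sign:
  fixes z w :: complex and e t :: real
  defines "u \<equiv> (z - of_real e) / (z - of_real t)" and "v \<equiv> (w - of_real e) / (w - of_real t)"
  assumes u: "0 < (e - t) * Re u" and v: "0 < (e - t) * Re v"
  shows "Im z = 0 \<Longrightarrow> Im w = 0 \<Longrightarrow> 0 < Re (u * v)"
    and "0 < Im z * Im w \<Longrightarrow> 0 < Im z * Im (u * v)"
proof -
  define Nz Nw where "Nz = (cmod (z - of_real t))\<^sup>2" and "Nw = (cmod (w - of_real t))\<^sup>2"
  have Im_u: "Im u = Im z * (e - t) / Nz" and Im_v: "Im v = Im w * (e - t) / Nw"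
    by (simp_all add: u_def v_def Nz_def Nw_def Re_Im_real_ratio)
  have Re_uv: "0 < Re u * Re v"
    using u v by (auto simp: zero_less_mult_iff)
  show "0 < Re (u * v)" if "Im z = 0" "Im w = 0"
    using Re_uv that by (simp add: Im_u Im_v)
  show "0 < Im z * Im (u * v)" if zw: "0 < Im z * Im w"
  proof -
    have "Nz > 0" "Nw > 0" using zw by (auto simp: Nz_def Nw_def)
    have "Im z * Im (u * v) = (Im z * Im w / Nw) * ((e - t) * Re u) + ((Im z)\<^sup>2 / Nz) * ((e - t) * Re v)"
      using \<open>Nz > 0\<close> \<open>Nw > 0\<close> by (simp add: Im_u Im_v power2_eq_square field_simps)
    moreover have "0 < Im z * Im w / Nw" "0 < (Im z)\<^sup>2 / Nz"
      using zw \<open>Nz > 0\<close> \<open>Nw > 0\<close> by (auto simp: zero_less_mult_iff)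
    ultimately show ?thesis using u v by (metis add_pos_pos mult_pos_pos)
  qed
qed

lemma pole_sum_diff:
  assumes "\<And>i. i \<in> I \<Longrightarrow> z \<noteq> of_real (t i)" and "\<And>i. i \<in> I \<Longrightarrow> w \<noteq> of_real (t i)"
  shows "pole_sum D t I z - pole_sum D t I w =
           (w - z) * (\<Sum>i\<in>I. of_real (D i) / ((z - of_real (t i)) * (w - of_real (t i))))"
  unfolding pole_sum_def sum_subtractf[symmetric] sum_distrib_left
proof (rule sum.cong[OF refl])
  fix i assume "i \<in> I"
  then have "z - of_real (t i) \<noteq> 0" "w - of_real (t i) \<noteq> 0" using assms by auto
  then show "of_real (D i) / (z - of_real (t i)) - of_real (D i) / (w - of_real (t i)) =
      (w - z) * (of_real (D i) / ((z - of_real (t i)) * (w - of_real (t i))))"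
    by (simp add: field_simps)
qed

lemma Im_pole_sum:
  "Im (pole_sum D t I z) = - Im z * (\<Sum>i\<in>I. D i / (cmod (z - of_real (t i)))\<^sup>2)"
  unfolding pole_sum_def Im_sum sum_distrib_left cmod_power2
  by (intro sum.cong refl) (simp add: Im_divide)

lemma pole_sum_Im_sign:
  fixes D t :: "'b \<Rightarrow> real"
  assumes fin: "finite I" and ne: "I \<noteq> {}" and D_pos: "\<And>i. i \<in> I \<Longrightarrow> 0 < D i"
    and z: "\<And>i. i \<in> I \<Longrightarrow> z \<noteq> of_real (t i)" and w: "\<And>i. i \<in> I \<Longrightarrow> w \<noteq> of_real (t i)"
    and eq: "pole_sum D t I z = pole_sum D t I w"
  shows "(Im z = 0 \<and> Im w = 0) \<or> 0 < Im z * Im w"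
proof -
  have weight_pos: "0 < (\<Sum>i\<in>I. D i / (cmod (x - of_real (t i)))\<^sup>2)"
    if "\<And>i. i \<in> I \<Longrightarrow> x \<noteq> of_real (t i)" for x
    using fin ne D_pos that by (intro sum_pos) auto
  define Kz Kw where "Kz = (\<Sum>i\<in>I. D i / (cmod (z - of_real (t i)))\<^sup>2)"
    and "Kw = (\<Sum>i\<in>I. D i / (cmod (w - of_real (t i)))\<^sup>2)"
  have "Kz > 0" "Kw > 0" using weight_pos z w by (auto simp: Kz_def Kw_def)
  have "Im z * Kz = Im w * Kw"
    using arg_cong[OF eq, of Im] by (simp add: Im_pole_sum Kz_def Kw_def)
  show ?thesis
  proof (cases "Im z = 0")
    case True
    then show ?thesis using \<open>Im z * Kz = Im w * Kw\<close> \<open>Kw > 0\<close> by simp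
  next
    case False
    then have "0 < (Im z)\<^sup>2 * Kz" using \<open>Kz > 0\<close> by simp
    also have "(Im z)\<^sup>2 * Kz = (Im z * Im w) * Kw"
      using \<open>Im z * Kz = Im w * Kw\<close> by (simp add: power2_eq_square algebra_simps)
    finally show ?thesis using \<open>Kw > 0\<close> by (simp add: zero_less_mult_iff)
  qed
qed

text \<open>Otherwise the sum of D i u i v i,
  which equals (z - e)(w - e)(G z - G w)/(w - z) = 0, would have positive real part (real case)
  or an imaginary part of the sign of Im z (non-real case).\<close>

lemma pole_sum_injective:
  fixes D t :: "'b \<Rightarrow> real" and e :: real
  assumes fin: "finite I" and D_pos: "\<And>i. i \<in> I \<Longrightarrow> 0 < D i"
    and i0: "i0 \<in> I" "t i0 \<noteq> e"
    and z: "pole_compatible e t I z" and w: "pole_compatible e t I w"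
    and eq: "pole_sum D t I z = pole_sum D t I w"
  shows "z = w"
proof (rule ccontr)
  assume "z \<noteq> w"
  have z_off: "z \<noteq> of_real (t i)" and w_off: "w \<noteq> of_real (t i)" if "i \<in> I" for i
    using z w that by (auto simp: pole_compatible_def)
  define u v where "u i = (z - of_real e) / (z - of_real (t i))"
    and "v i = (w - of_real e) / (w - of_real (t i))" for i
  have far_pole: "0 < (e - t i) * Re (u i)" "0 < (e - t i) * Re (v i)" if "i \<in> I" "t i \<noteq> e" for i
    using z w that by (auto simp: pole_compatible_def u_def v_def)
  have near_pole: "u i = 1" "v i = 1" if "i \<in> I" "t i = e" for i
    using z_off w_off that by (auto simp: u_def v_def)
  have "(\<Sum>i\<in>I. of_real (D i) * (u i * v i)) =
        (z - of_real e) * (w - of_real e) *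
        (\<Sum>i\<in>I. of_real (D i) / ((z - of_real (t i)) * (w - of_real (t i))))"
    unfolding sum_distrib_left by (intro sum.cong refl) (simp add: u_def v_def)
  also have "(\<Sum>i\<in>I. of_real (D i) / ((z - of_real (t i)) * (w - of_real (t i)))) = 0"
    using pole_sum_diff[of I z t w D] z_off w_off eq \<open>z \<noteq> w\<close> by simp
  finally have uv_sum: "(\<Sum>i\<in>I. of_real (D i) * (u i * v i)) = 0" by simp
  from pole_sum_Im_sign[OF fin _ D_pos z_off w_off eq] i0
  consider "Im z = 0" "Im w = 0" | "0 < Im z * Im w" by blast
  then show False
  proof cases
    case 1
    have "0 < Re (of_real (D i) * (u i * v i))" if i: "i \<in> I" for i
    proof (cases "t i = e")
      case True
      then show ?thesis using near_pole[OF i True] D_pos[OF i] by simp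
    next
      case False
      have "0 < Re (u i * v i)"
        using mobius_product_sign(1)[of e "t i" z w] far_pole[OF i False] 1
        unfolding u_def v_def by blast
      then show ?thesis using D_pos[OF i] by simp
    qed
    then have "0 < Re (\<Sum>i\<in>I. of_real (D i) * (u i * v i))"
      unfolding Re_sum using fin i0 by (intro sum_pos) auto
    then show False using uv_sum by simp
  next
    case 2
    have term_sign: "0 < Im z * Im (of_real (D i) * (u i * v i))" if i: "i \<in> I" "t i \<noteq> e" for i
    proof -
      have "0 < Im z * Im (u i * v i)"
        using mobius_product_sign(2)[of e "t i" z w] far_pole[OF i] 2
        unfolding u_def v_def by blast
      then have "0 < D i * (Im z * Im (u i * v i))" using D_pos[OF i(1)] by simp
      then show ?thesis by (simp add: algebra_simps)
    qed
    have "0 \<le> Im z * Im (of_real (D i) * (u i * v i))" if "i \<in> I" for i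
      using term_sign[OF that] near_pole[OF that] by (cases "t i = e") auto
    then have "0 < Im z * Im (\<Sum>i\<in>I. of_real (D i) * (u i * v i))"
      unfolding Im_sum sum_distrib_left using fin i0 term_sign by (intro sum_pos2) auto
    then show False using uv_sum by simp
  qed
qed

lemma cross_term_eq:
  "(Re z - a) * (Re z - b) + (Im z)\<^sup>2 = (cmod (z - of_real ((a + b) / 2)))\<^sup>2 - ((b - a) / 2)\<^sup>2"
  unfolding cmod_power2 by (simp add: power2_eq_square field_simps)

lemma diam_disk_pole_compatible:
  fixes t :: "'b \<Rightarrow> real"
  assumes z: "z \<in> diam_disk a b" and gap: "\<And>i. i \<in> I \<Longrightarrow> t i \<le> a \<or> b \<le> t i"
  shows "pole_compatible a t I z"
proof -
  define x y where "x = Re z" and "y = Im z"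
  have "cmod (z - of_real ((a + b) / 2)) < (b - a) / 2"
    using z by (simp add: diam_disk_def dist_norm norm_minus_commute)
  then have "0 < (b - a) / 2" by (meson le_less_trans norm_ge_zero)
  then have "a < b" by simp
  have "(cmod (z - of_real ((a + b) / 2)))\<^sup>2 < ((b - a) / 2)\<^sup>2"
    using \<open>cmod (z - of_real ((a + b) / 2)) < (b - a) / 2\<close> by (intro power_strict_mono) auto
  then have inside: "(x - a) * (x - b) + y\<^sup>2 < 0"
    unfolding x_def y_def cross_term_eq by simp
  then have "(x - a) * (x - b) < 0" using zero_le_power2[of y] by linarith
  then have x: "a < x" "x < b" using \<open>a < b\<close> by (auto simp: mult_less_0_iff)
  show ?thesis
    unfolding pole_compatible_real x_def[symmetric] y_def[symmetric]
  proof (intro ballI conjI impI)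
    fix i assume i: "i \<in> I"
    show "z \<noteq> of_real (t i)"
      using gap[OF i] x by (auto simp: x_def)
    assume "t i \<noteq> a"
    show "0 < (a - t i) * ((x - a) * (x - t i) + y\<^sup>2)"
    proof (cases "t i < a")
      case True
      then have "0 < (x - a) * (x - t i)" using x by simp
      then show ?thesis using True by (simp add: add_pos_nonneg)
    next
      case False
      then have "b \<le> t i" using gap[OF i] \<open>t i \<noteq> a\<close> by auto
      then have "(x - a) * (x - t i) \<le> (x - a) * (x - b)" using x by (intro mult_left_mono) auto
      then show ?thesis using inside False \<open>t i \<noteq> a\<close> by (intro mult_neg_neg) auto
    qed
  qed
qed

lemma exterior_pole_compatible:
  fixes t :: "'b \<Rightarrow> real"
  assumes ab: "a \<le> b" and z: "(b - a) / 2 < cmod (z - of_real ((a + b) / 2))"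
    and range: "\<And>i. i \<in> I \<Longrightarrow> a \<le> t i \<and> t i \<le> b"
  shows "pole_compatible b t I z"
proof -
  define x y where "x = Re z" and "y = Im z"
  have outside: "0 < (x - b) * (x - a) + y\<^sup>2"
  proof -
    have "((b - a) / 2)\<^sup>2 < (cmod (z - of_real ((a + b) / 2)))\<^sup>2"
      using z ab by (intro power_strict_mono) auto
    then show ?thesis unfolding x_def y_def using cross_term_eq[of z a b] by (simp add: algebra_simps)
  qed
  show ?thesis
    unfolding pole_compatible_real x_def[symmetric] y_def[symmetric]
  proof (intro ballI conjI impI)
    fix i assume i: "i \<in> I"
    show "z \<noteq> of_real (t i)"
    proof
      assume "z = of_real (t i)"
      then have "(x - b) * (x - a) \<le> 0" "y = 0"
        using range[OF i] by (auto simp: x_def y_def mult_le_0_iff)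
      then show False using outside by simp
    qed
    assume "t i \<noteq> b"
    then have "t i < b" using range[OF i] by simp
    have "0 < (x - b) * (x - t i) + y\<^sup>2"
    proof (cases "x \<le> b")
      case True
      then have "(x - b) * (x - a) \<le> (x - b) * (x - t i)"
        using range[OF i] by (intro mult_left_mono_neg) auto
      then show ?thesis using outside by linarith
    next
      case False
      then show ?thesis using \<open>t i < b\<close> by (simp add: add_pos_nonneg)
    qed
    then show "0 < (b - t i) * ((x - b) * (x - t i) + y\<^sup>2)" using \<open>t i < b\<close> by simp
  qed
qed

lemma ratio_as_pole_sum:
  fixes p q :: "real poly" and pr qr :: "nat \<Rightarrow> real"
  assumes k: "1 \<le> k" and degp: "degree p = k" and degq: "degree q = k - 1"
    and inj_p: "inj_on pr {1..k}" and inj_q: "inj_on qr {1..k-1}"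
    and p_zero: "\<And>i. i \<in> {1..k} \<Longrightarrow> poly (map_poly complex_of_real p) (of_real (pr i)) = 0"
    and q_zero: "\<And>m. m \<in> {1..k-1} \<Longrightarrow> poly (map_poly complex_of_real q) (of_real (qr m)) = 0"
    and x: "poly (map_poly complex_of_real p) x \<noteq> 0"
  shows "poly (map_poly complex_of_real q) x / poly (map_poly complex_of_real p) x =
           of_real (lead_coeff q / lead_coeff p) * pole_sum (interlacing_weight pr qr k) pr {1..k} x"
proof -
  define P Q where "P = map_poly complex_of_real p" and "Q = map_poly complex_of_real q"
  have inj_cp: "inj_on (\<lambda>i. complex_of_real (pr i)) {1..k}"
    using inj_p by (metis (mono_tags, lifting) inj_onD inj_onI of_real_eq_iff)
  have inj_cq: "inj_on (\<lambda>m. complex_of_real (qr m)) {1..k-1}"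
    using inj_q by (metis (mono_tags, lifting) inj_onD inj_onI of_real_eq_iff)
  have degP: "degree P = card {1..k}" and degQ: "degree Q = card {1..k-1}"
    using degp degq by (simp_all add: P_def Q_def degree_map_poly)
  have lead_P: "lead_coeff P = of_real (lead_coeff p)"
    using degp by (simp add: P_def degree_map_poly coeff_map_poly)
  have lead_Q: "lead_coeff Q = of_real (lead_coeff q)"
    using degq by (simp add: Q_def degree_map_poly coeff_map_poly)
  have x_off: "x \<noteq> of_real (pr i)" if "i \<in> {1..k}" for i
    using x p_zero[OF that] by auto
  have Q_at_root: "poly Q (of_real (pr i)) = of_real (lead_coeff q * (\<Prod>m\<in>{1..k-1}. pr i - qr m))" for i
    using poly_eq_lead_coeff_prod_roots[OF _ inj_cq q_zero[folded Q_def] degQ] lead_Q by simp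
  have "poly Q x / poly P x = (\<Sum>i\<in>{1..k}. poly Q (of_real (pr i)) /
          (lead_coeff P * (\<Prod>l\<in>{1..k}-{i}. of_real (pr i) - of_real (pr l))) / (x - of_real (pr i)))"
    using k degP degQ x_off
    by (intro partial_fractions_simple_roots[OF _ inj_cp p_zero[folded P_def]]) auto
  also have "\<dots> = (\<Sum>i\<in>{1..k}. of_real (lead_coeff q / lead_coeff p) *
                     (of_real (interlacing_weight pr qr k i) / (x - of_real (pr i))))"
    by (intro sum.cong refl) (simp add: Q_at_root lead_P interlacing_weight_def)
  finally show ?thesis
    by (simp add: P_def Q_def pole_sum_def sum_distrib_left)
qed

text \<open>The equation q z / p z = c with c \<noteq> 0 has at most one solution among the points
  compatible with any fixed real e: it pins down the value of the pole sum, which is injective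
  there.\<close>

lemma interlacing_ratio_injective:
  fixes p q :: "real poly" and pr qr :: "nat \<Rightarrow> real" and e :: real and z w c :: complex
  assumes k: "k \<ge> 2"
    and degp: "degree p = k" and degq: "degree q = k - 1"
    and pr_mono: "\<And>i j. 1 \<le> i \<Longrightarrow> i < j \<Longrightarrow> j \<le> k \<Longrightarrow> pr i < pr j"
    and qr_mono: "\<And>i j. 1 \<le> i \<Longrightarrow> i < j \<Longrightarrow> j \<le> k - 1 \<Longrightarrow> qr i < qr j"
    and p_roots: "{z. poly (map_poly complex_of_real p) z = 0} = complex_of_real ` pr ` {1..k}"
    and q_roots: "{z. poly (map_poly complex_of_real q) z = 0} = complex_of_real ` qr ` {1..k-1}"
    and interlace: "\<And>j. 1 \<le> j \<Longrightarrow> j \<le> k - 1 \<Longrightarrow> pr j < qr j \<and> qr j < pr (j + 1)"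
    and z: "pole_compatible e pr {1..k} z" and w: "pole_compatible e pr {1..k} w"
    and c: "c \<noteq> 0"
    and sol_z: "poly (map_poly complex_of_real q) z / poly (map_poly complex_of_real p) z = c"
    and sol_w: "poly (map_poly complex_of_real q) w / poly (map_poly complex_of_real p) w = c"
  shows "z = w"
proof -
  define G where "G = pole_sum (interlacing_weight pr qr k) pr {1..k}"
  define scale where "scale = lead_coeff q / lead_coeff p"
  have inj_p: "inj_on pr {1..k}" and inj_q: "inj_on qr {1..k-1}"
    by (rule strict_mono_on_imp_inj_on, rule strict_mono_onI, use pr_mono qr_mono in auto)+
  have "p \<noteq> 0" "q \<noteq> 0" using degp degq k by auto
  then have "scale \<noteq> 0" by (simp add: scale_def)
  have "c = of_real scale * G x"
    if "poly (map_poly complex_of_real q) x / poly (map_poly complex_of_real p) x = c" for x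
  proof -
    have "poly (map_poly complex_of_real p) x \<noteq> 0" using that c by auto
    then show ?thesis
      unfolding that[symmetric] G_def scale_def using k p_roots q_roots
      by (intro ratio_as_pole_sum[OF _ degp degq inj_p inj_q]) auto
  qed
  then have "G z = G w" using sol_z sol_w \<open>scale \<noteq> 0\<close> by (metis mult_cancel_left of_real_eq_0_iff)
  obtain i0 where i0: "i0 \<in> {1..k}" "pr i0 \<noteq> e"
  proof (cases "pr 1 = e")
    case True
    then show ?thesis using that[of k] pr_mono[of 1 k] k by auto
  next
    case False
    then show ?thesis using that[of 1] k by auto
  qed
  have "\<And>i. i \<in> {1..k} \<Longrightarrow> 0 < interlacing_weight pr qr k i"
    by (rule interlacing_weight_pos[of k pr qr, OF pr_mono interlace])
  from pole_sum_injective[OF _ this i0 z w] \<open>G z = G w\<close> show "z = w"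
    unfolding G_def by simp
qed

text \<open>The corollary: apply the criterion with e = p_j on the disk D_j, which contains no root
  of p, and with e = p_k on the exterior of the disk with diameter [p_1, p_k], which contains
  all roots of p.\<close>

theorem corollary1:
  fixes p q :: "real poly" and k :: nat and pr qr :: "nat \<Rightarrow> real"
    and r \<phi> :: real
  assumes k: "k \<ge> 2"
    and degp: "degree p = k" and degq: "degree q = k - 1"
    and pr_mono: "\<And>i j. 1 \<le> i \<Longrightarrow> i < j \<Longrightarrow> j \<le> k \<Longrightarrow> pr i < pr j"
    and qr_mono: "\<And>i j. 1 \<le> i \<Longrightarrow> i < j \<Longrightarrow> j \<le> k - 1 \<Longrightarrow> qr i < qr j"
    and p_roots: "{z::complex. poly (map_poly complex_of_real p) z = 0} = complex_of_real ` pr ` {1..k}"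
    and q_roots: "{z::complex. poly (map_poly complex_of_real q) z = 0} = complex_of_real ` qr ` {1..k-1}"
    and p_simple: "\<And>j. j \<in> {1..k} \<Longrightarrow> order (pr j) p = 1"
    and q_simple: "\<And>j. j \<in> {1..k-1} \<Longrightarrow> order (qr j) q = 1"
    and interlace: "\<And>j. 1 \<le> j \<Longrightarrow> j \<le> k - 1 \<Longrightarrow> pr j < qr j \<and> qr j < pr (j + 1)"
    and r: "r > 0"
    and phi: "-pi < \<phi>" "\<phi> \<le> pi"
  shows "(\<forall>j \<in> {1..k-1}. \<forall>z \<in> diam_disk (pr j) (pr (j + 1)). \<forall>w \<in> diam_disk (pr j) (pr (j + 1)).
            poly (map_poly complex_of_real q) z / poly (map_poly complex_of_real p) z = r * cis \<phi> \<and>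
            poly (map_poly complex_of_real q) w / poly (map_poly complex_of_real p) w = r * cis \<phi>
            \<longrightarrow> z = w)
       \<and> (\<forall>z w. cmod (z - complex_of_real ((pr 1 + pr k) / 2)) > (pr k - pr 1) / 2 \<and>
                 cmod (w - complex_of_real ((pr 1 + pr k) / 2)) > (pr k - pr 1) / 2 \<and>
            poly (map_poly complex_of_real q) z / poly (map_poly complex_of_real p) z = r * cis \<phi> \<and>
            poly (map_poly complex_of_real q) w / poly (map_poly complex_of_real p) w = r * cis \<phi>
            \<longrightarrow> z = w)"
proof -
  have pr_le: "pr i \<le> pr j" if "1 \<le> i" "i \<le> j" "j \<le> k" for i j
    using pr_mono[of i j] that by (cases "i = j") auto
  have unique: "z = w"
    if "pole_compatible e pr {1..k} z" "pole_compatible e pr {1..k} w" "c \<noteq> 0"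
      "poly (map_poly complex_of_real q) z / poly (map_poly complex_of_real p) z = c"
      "poly (map_poly complex_of_real q) w / poly (map_poly complex_of_real p) w = c" for e z w c
    using k degp degq pr_mono qr_mono p_roots q_roots interlace that
    by (rule interlacing_ratio_injective)
  have "r * cis \<phi> \<noteq> 0" using r by simp
  show ?thesis
  proof (intro conjI ballI allI impI; elim conjE)
    fix j z w
    assume j: "j \<in> {1..k-1}"
      and zw: "z \<in> diam_disk (pr j) (pr (j + 1))" "w \<in> diam_disk (pr j) (pr (j + 1))"
      and sol: "poly (map_poly complex_of_real q) z / poly (map_poly complex_of_real p) z = r * cis \<phi>"
        "poly (map_poly complex_of_real q) w / poly (map_poly complex_of_real p) w = r * cis \<phi>"
    have gap: "pr i \<le> pr j \<or> pr (j + 1) \<le> pr i" if "i \<in> {1..k}" for i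
      using that j pr_le[of i j] pr_le[of "j + 1" i] by (cases "i \<le> j") auto
    have compatible: "pole_compatible (pr j) pr {1..k} x"
      if "x \<in> diam_disk (pr j) (pr (j + 1))" for x
      using that by (rule diam_disk_pole_compatible) (rule gap)
    show "z = w"
      by (rule unique[OF compatible[OF zw(1)] compatible[OF zw(2)] \<open>r * cis \<phi> \<noteq> 0\<close> sol])
  next
    fix z w
    assume zw: "(pr k - pr 1) / 2 < cmod (z - of_real ((pr 1 + pr k) / 2))"
        "(pr k - pr 1) / 2 < cmod (w - of_real ((pr 1 + pr k) / 2))"
      and sol: "poly (map_poly complex_of_real q) z / poly (map_poly complex_of_real p) z = r * cis \<phi>"
        "poly (map_poly complex_of_real q) w / poly (map_poly complex_of_real p) w = r * cis \<phi>"
    have range: "pr 1 \<le> pr i \<and> pr i \<le> pr k" if "i \<in> {1..k}" for i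
      using that pr_le[of 1 i] pr_le[of i k] by auto
    have "pr 1 \<le> pr k" using pr_le[of 1 k] k by simp
    have compatible: "pole_compatible (pr k) pr {1..k} x"
      if "(pr k - pr 1) / 2 < cmod (x - of_real ((pr 1 + pr k) / 2))" for x
      using \<open>pr 1 \<le> pr k\<close> that by (rule exterior_pole_compatible) (rule range)
    show "z = w"
      by (rule unique[OF compatible[OF zw(1)] compatible[OF zw(2)] \<open>r * cis \<phi> \<noteq> 0\<close> sol])
  qed
qed

end
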